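(* Let $m\geq n\geq 2$. If $S$ is a $\{2\}$-resolving set of $K_m\Box K_n$, and $q$ and $r$ are integers such that $|S|=qm+r$ with $0\leq r<m$, then $$r\binom{n-(q+1)}{2}+(m-r)\binom{n-q}{2}\leq\binom{n}{2}.$$
   Context: $K_m\Box K_n$ has vertices $av$ with $a\in V(K_m)$, $v\in V(K_n)$; distinct $av,bu$ are adjacent iff $a=b$ or $u=v$. $d$ is the shortest-path distance, $d(s,X)=\min_{x\in X}d(s,x)$, $\mathcal{D}_S(X)=(d(s_1,X),\dots,d(s_k,X))$ for $S=\{s_1,\dots,s_k\}$. $S$ is a $\{2\}$-resolving set if $\mathcal{D}_S(X)\neq\mathcal{D}_S(Y)$ for all distinct nonempty vertex sets $X,Y$ with $|X|,|Y|\leq 2$. Binomial coefficients $\binom{a}{2}$ are taken as $a(a-1)/2$ for integers $a$ (in particular $0$ for $a\in\{0,1\}$). *)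

theory Defs
  imports Main "HOL-Library.FuncSet"
begin

definition rook_V :: "nat \<Rightarrow> nat \<Rightarrow> (nat \<times> nat) set" where
  "rook_V m n = {0..<m} \<times> {0..<n}"

definition rook_adj :: "nat \<Rightarrow> nat \<Rightarrow> nat \<times> nat \<Rightarrow> nat \<times> nat \<Rightarrow> bool" where
  "rook_adj m n x y \<longleftrightarrow> x \<in> rook_V m n \<and> y \<in> rook_V m n \<and> x \<noteq> y \<and>
     (fst x = fst y \<or> snd x = snd y)"

definition rook_dist :: "nat \<Rightarrow> nat \<Rightarrow> nat \<times> nat \<Rightarrow> nat \<times> nat \<Rightarrow> nat" where
  "rook_dist m n x y = (LEAST k. (rook_adj m n ^^ k) x y)"

definition rook_setdist :: "nat \<Rightarrow> nat \<Rightarrow> nat \<times> nat \<Rightarrow> (nat \<times> nat) set \<Rightarrow> nat" where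
  "rook_setdist m n s X = Min (rook_dist m n s ` X)"

definition rook_dvec :: "nat \<Rightarrow> nat \<Rightarrow> (nat \<times> nat) set \<Rightarrow> (nat \<times> nat) set \<Rightarrow> (nat \<times> nat \<Rightarrow> nat)" where
  "rook_dvec m n S X = restrict (\<lambda>s. rook_setdist m n s X) S"

definition two_resolving :: "nat \<Rightarrow> nat \<Rightarrow> (nat \<times> nat) set \<Rightarrow> bool" where
  "two_resolving m n S \<longleftrightarrow> S \<subseteq> rook_V m n \<and>
     (\<forall>X Y. X \<subseteq> rook_V m n \<longrightarrow> Y \<subseteq> rook_V m n \<longrightarrow> X \<noteq> {} \<longrightarrow> Y \<noteq> {} \<longrightarrow>
        card X \<le> 2 \<longrightarrow> card Y \<le> 2 \<longrightarrow> X \<noteq> Y \<longrightarrow> rook_dvec m n S X \<noteq> rook_dvec m n S Y)"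

definition binom2 :: "int \<Rightarrow> int" where
  "binom2 a = a * (a - 1) div 2"

end

theory Submission
  imports Defs
begin

text \<open>
  Two vertices of \<open>K\<^sub>m \<box> K\<^sub>n\<close> are at distance 0, 1 or 2 according as they coincide,
  share a row or a column, or neither. So if \<open>S\<close> misses a rectangle \<open>{au, av, bu, bv}\<close>
  with \<open>a \<noteq> b\<close>, \<open>u \<noteq> v\<close>, every vertex of \<open>S\<close> is equidistant from \<open>{av, bu}\<close> and
  \<open>{au, bv}\<close>; hence a \<open>{2}\<close>-resolving set meets every rectangle. Writing \<open>G\<^sub>a\<close> for the
  columns of row \<open>a\<close> not in \<open>S\<close>, two distinct rows thus share at most one such column,
  the 2-subsets of the \<open>G\<^sub>a\<close> are pairwise disjoint, and \<open>\<Sum>\<^sub>a C(|G\<^sub>a|,2) \<le> C(n,2)\<close>.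
  As \<open>\<Sum>\<^sub>a |G\<^sub>a| = m(n - q) - r\<close>, convexity of \<open>t \<mapsto> C(t,2)\<close> on the integers bounds the
  left-hand side below by \<open>r C(n-q-1,2) + (m-r) C(n-q,2)\<close>.
\<close>

lemma rook_dist_eq:
  assumes x: "x \<in> rook_V m n" and y: "y \<in> rook_V m n"
  shows "rook_dist m n x y =
    (if x = y then 0 else if fst x = fst y \<or> snd x = snd y then 1 else 2)"
proof -
  have walk0: "(rook_adj m n ^^ 0) x y \<longleftrightarrow> x = y"
    by auto
  have walk1: "(rook_adj m n ^^ 1) x y \<longleftrightarrow> x \<noteq> y \<and> (fst x = fst y \<or> snd x = snd y)"
    using x y by (auto simp: rook_adj_def)
  consider "x = y" | "x \<noteq> y" "fst x = fst y \<or> snd x = snd y"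
    | "x \<noteq> y" "fst x \<noteq> fst y" "snd x \<noteq> snd y"
    by blast
  then show ?thesis
  proof cases
    case 1
    then show ?thesis
      unfolding rook_dist_def using walk0 by (auto intro: Least_equality)
  next
    case 2
    have "(LEAST k. (rook_adj m n ^^ k) x y) = 1"
    proof (rule Least_equality)
      show "(rook_adj m n ^^ 1) x y"
        using walk1 2 by blast
      show "1 \<le> k" if "(rook_adj m n ^^ k) x y" for k
        using that walk0 2 by (metis less_one not_less)
    qed
    then show ?thesis
      using 2 by (simp add: rook_dist_def)
  next
    case 3
    have "rook_adj m n x (fst x, snd y)" "rook_adj m n (fst x, snd y) y"
      using x y 3 by (auto simp: rook_adj_def rook_V_def)
    then have "(rook_adj m n ^^ 2) x y"
      by (auto simp: numeral_2_eq_2 relpowp_Suc_I2)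
    moreover have "\<not> (rook_adj m n ^^ k) x y" if "k < 2" for k
      using that walk0 walk1 3 by (auto simp: less_2_cases_iff)
    ultimately have "(LEAST k. (rook_adj m n ^^ k) x y) = 2"
      by (intro Least_equality) (auto simp: not_less[symmetric])
    then show ?thesis
      using 3 by (simp add: rook_dist_def)
  qed
qed

lemma two_resolving_meets_rectangle:
  assumes R: "two_resolving m n S"
    and ab: "a < m" "b < m" "a \<noteq> b" and uv: "u < n" "v < n" "u \<noteq> v"
  shows "(a, u) \<in> S \<or> (a, v) \<in> S \<or> (b, u) \<in> S \<or> (b, v) \<in> S"
proof (rule ccontr)
  assume missed: "\<not> ?thesis"
  define X where "X = {(a, v), (b, u)}"
  define Y where "Y = {(a, u), (b, v)}"
  have corners: "(a, u) \<in> rook_V m n" "(a, v) \<in> rook_V m n"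
    "(b, u) \<in> rook_V m n" "(b, v) \<in> rook_V m n"
    using ab uv by (auto simp: rook_V_def)
  have S_V: "S \<subseteq> rook_V m n"
    using R by (simp add: two_resolving_def)
  have "rook_dvec m n S X = rook_dvec m n S Y"
    unfolding rook_dvec_def
  proof (rule restrict_ext)
    fix s assume "s \<in> S"
    with S_V missed have "s \<in> rook_V m n" "s \<notin> X \<union> Y"
      by (auto simp: X_def Y_def)
    then show "rook_setdist m n s X = rook_setdist m n s Y"
      unfolding rook_setdist_def X_def Y_def
      using corners by (cases s) (simp add: rook_dist_eq min_def)
  qed
  moreover have "X \<subseteq> rook_V m n" "Y \<subseteq> rook_V m n" "card X \<le> 2" "card Y \<le> 2" "X \<noteq> Y"
    using corners ab uv by (auto simp: X_def Y_def card_insert_if)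
  ultimately show False
    using R by (auto simp: two_resolving_def X_def Y_def)
qed

definition rook_row_gaps :: "nat \<Rightarrow> (nat \<times> nat) set \<Rightarrow> nat \<Rightarrow> nat set" where
  "rook_row_gaps n S a = {u. u < n \<and> (a, u) \<notin> S}"

lemma card_rook_row_gaps_inter_le_1:
  assumes "two_resolving m n S" and "a < m" "b < m" "a \<noteq> b"
  shows "card (rook_row_gaps n S a \<inter> rook_row_gaps n S b) \<le> 1"
proof -
  have "u = v" if "u \<in> rook_row_gaps n S a \<inter> rook_row_gaps n S b"
    and "v \<in> rook_row_gaps n S a \<inter> rook_row_gaps n S b" for u v
    using that two_resolving_meets_rectangle[OF assms, of u v]
    by (auto simp: rook_row_gaps_def)
  then show ?thesis
    by (simp add: card_le_Suc0_iff_eq rook_row_gaps_def)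
qed

lemma sum_card_rook_row_gaps:
  assumes "S \<subseteq> rook_V m n"
  shows "(\<Sum>a<m. card (rook_row_gaps n S a)) = m * n - card S"
proof -
  have "rook_V m n - S = Sigma {..<m} (rook_row_gaps n S)"
    by (auto simp: rook_V_def rook_row_gaps_def)
  then have "(\<Sum>a<m. card (rook_row_gaps n S a)) = card (rook_V m n - S)"
    by (simp add: card_SigmaI rook_row_gaps_def)
  also have "\<dots> = m * n - card S"
    using assms by (simp add: card_Diff_subset finite_subset rook_V_def)
  finally show ?thesis .
qed

lemma sum_card_choose_two_le:
  assumes "finite U" and "finite I" and sub: "\<And>i. i \<in> I \<Longrightarrow> A i \<subseteq> U"
    and inter: "\<And>i j. i \<in> I \<Longrightarrow> j \<in> I \<Longrightarrow> i \<noteq> j \<Longrightarrow> card (A i \<inter> A j) \<le> 1"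
  shows "(\<Sum>i\<in>I. card (A i) choose 2) \<le> card U choose 2"
proof -
  define P where "P i = {p. p \<subseteq> A i \<and> card p = 2}" for i
  have fin_A: "finite (A i)" if "i \<in> I" for i
    using sub that \<open>finite U\<close> finite_subset by blast
  have "P i \<inter> P j = {}" if "i \<in> I" "j \<in> I" "i \<noteq> j" for i j
  proof -
    have "2 \<le> card (A i \<inter> A j)" if "p \<in> P i \<inter> P j" for p
      using that fin_A \<open>i \<in> I\<close> card_mono[of "A i \<inter> A j" p] by (auto simp: P_def)
    with inter[OF that] show ?thesis
      by fastforce
  qed
  moreover have fin_P: "finite (P i)" if "i \<in> I" for i
    using fin_A[OF that] by (simp add: P_def)
  ultimately have "(\<Sum>i\<in>I. card (P i)) = card (\<Union>i\<in>I. P i)"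
    using \<open>finite I\<close> by (simp add: card_UN_disjoint)
  also have "\<dots> \<le> card {p. p \<subseteq> U \<and> card p = 2}"
    using \<open>finite U\<close> sub by (intro card_mono) (auto simp: P_def)
  finally show ?thesis
    using \<open>finite U\<close> fin_A by (simp add: n_subsets P_def)
qed

lemma two_binom2: "2 * binom2 x = x * (x - 1)"
  unfolding binom2_def by (simp add: dvd_mult_div_cancel)

lemma binom2_of_nat: "binom2 (int k) = int (k choose 2)"
  by (cases k) (simp_all add: choose_two binom2_def zdiv_int algebra_simps)

text \<open>Convexity of \<open>binom2\<close>: it lies above the line through its values at \<open>y - 1\<close> and \<open>y\<close>.\<close>

lemma binom2_ge_secant: "binom2 y + (x - y) * (y - 1) \<le> binom2 x"
proof -
  have "2 * (binom2 x - binom2 y - (x - y) * (y - 1)) = (x - y) * (x - y + 1)"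
    using two_binom2[of x] two_binom2[of y] by (simp add: algebra_simps)
  also have "\<dots> \<ge> 0"
    by (cases "x - y \<ge> 0") (simp_all add: mult_nonpos_nonpos)
  finally show ?thesis
    by simp
qed

lemma sum_binom2_ge:
  assumes "(\<Sum>i\<in>I. x i) = int (card I) * y - r"
  shows "r * binom2 (y - 1) + (int (card I) - r) * binom2 y \<le> (\<Sum>i\<in>I. binom2 (x i))"
proof -
  have binom2_pred: "binom2 (y - 1) = binom2 y - (y - 1)"
    using two_binom2[of y] two_binom2[of "y - 1"] by (simp add: algebra_simps)
  have "r * binom2 (y - 1) + (int (card I) - r) * binom2 y
      = int (card I) * binom2 y + ((\<Sum>i\<in>I. x i) - int (card I) * y) * (y - 1)"
    unfolding assms binom2_pred by (simp add: algebra_simps)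
  also have "\<dots> = (\<Sum>i\<in>I. binom2 y + (x i - y) * (y - 1))"
    by (simp add: sum.distrib sum_subtractf sum_distrib_right left_diff_distrib)
  also have "\<dots> \<le> (\<Sum>i\<in>I. binom2 (x i))"
    by (intro sum_mono binom2_ge_secant)
  finally show ?thesis .
qed

theorem mainTheorem13:
  fixes m n :: nat and S :: "(nat \<times> nat) set" and q r :: int
  assumes "2 \<le> n" and "n \<le> m"
    and "two_resolving m n S"
    and "int (card S) = q * int m + r" and "0 \<le> r" and "r < int m"
  shows "r * binom2 (int n - (q + 1)) + (int m - r) * binom2 (int n - q) \<le> binom2 (int n)"
proof -
  let ?G = "rook_row_gaps n S"
  have S_V: "S \<subseteq> rook_V m n"
    using assms(3) by (simp add: two_resolving_def)
  have "card S \<le> m * n"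
    using S_V card_mono[of "rook_V m n" S] by (simp add: rook_V_def)
  with sum_card_rook_row_gaps[OF S_V] assms(4)
  have "(\<Sum>a<m. int (card (?G a))) = int m * (int n - q) - r"
    by (simp flip: of_nat_sum add: of_nat_diff algebra_simps)
  then have "r * binom2 (int n - q - 1) + (int m - r) * binom2 (int n - q)
      \<le> (\<Sum>a<m. binom2 (int (card (?G a))))"
    using sum_binom2_ge[where I = "{..<m}"] by simp
  also have "\<dots> \<le> binom2 (int n)"
  proof -
    have "(\<Sum>a<m. card (?G a) choose 2) \<le> card {..<n} choose 2"
      using card_rook_row_gaps_inter_le_1[OF assms(3)]
      by (intro sum_card_choose_two_le) (auto simp: rook_row_gaps_def)
    then show ?thesis
      by (simp add: binom2_of_nat flip: of_nat_sum)
  qed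
  finally show ?thesis
    by (simp add: diff_diff_eq)
qed

end
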